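(* Let $S$ be a monoid and $A$ an $S$-act. Then: (a) for each $n\in\mathbb N$, $a\mapsto[a]$ embeds $A$ into $A^n_1$ and into $A^{\aleph_0}_1$, and with the natural identifications $A^i_1\subseteq A^j_1$ for $i\le j$ and $A^{\aleph_0}_1=\bigcup_{n}A^n_1$; (b) every finite consistent set of equations over $A$ in $m$ variables has a solution in $A^m_1$, hence in $A^n_1$ for every $n\ge m$ and in $A^{\aleph_0}_1$; (c) $A$ is $n$-absolutely pure if and only if $A$ is a retract of $A^n_1$, and $A$ is absolutely pure if and only if $A$ is a retract of $A^{\aleph_0}_1$.
   Context: A (right) $S$-act is a set with an action $(a,s)\mapsto as$ with $a1=a$, $a(st)=(as)t$. Equations over $A$ with variables from a set have the forms $xs=yt$, $xs=xt$, $xs=a$ ($a\in A$); a solution in $B\supseteq A$ is a family in $B$ satisfying them; a set is consistent if it has a solution in some $S$-act containing $A$. $A$ is $n$-absolutely pure if every finite consistent set of equations over $A$ in at most $n$ variables has a solution in $A$; absolutely pure if this holds for all $n$; a retract of $B\supseteq A$ if there is an $S$-morphism $B\to A$ fixing $A$ pointwise. For a set $\Sigma$ of equations, $v(\Sigma)$ is the number of variables occurring in it and $H(\Sigma)=\{(xu,yv):xu=yv\in\Sigma\}$, $K(\Sigma)=\{(xs,a):xs=a\in\Sigma\}$. Canonical first step: let $\Theta(A,m)$ be the collection of all finite consistent sets of equations $\Sigma$ over $A$ with $v(\Sigma)=m$, where variables are chosen so that distinct members of $\bigcup_m\Theta(A,m)$ use pairwise disjoint sets of variables. Let $\Omega_n$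 be the set of all variables occurring in members of $\bigcup_{1\le m\le n}\Theta(A,m)$ and $\Omega_{\aleph_0}=\bigcup_n\Omega_n$. Define $A^n_1=(A\sqcup F_S(\Omega_n))/\kappa(n)$ and $A^{\aleph_0}_1=(A\sqcup F_S(\Omega_{\aleph_0}))/\kappa(\aleph_0)$, where $F_S(\cdot)$ is the free $S$-act, $\kappa(n)$ is the congruence generated by $\bigcup\{H(\Sigma)\cup K(\Sigma):\Sigma\in\Theta(A,m),1\le m\le n\}$, and $\kappa(\aleph_0)$ that generated by $\bigcup\{H(\Sigma)\cup K(\Sigma):\Sigma\in\bigcup_m\Theta(A,m)\}$. *)

theory Defs
  imports Main
begin

definition is_act :: "'b set \<Rightarrow> ('b \<Rightarrow> 's::monoid_mult \<Rightarrow> 'b) \<Rightarrow> bool" where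
  "is_act B act \<longleftrightarrow> (\<forall>b\<in>B. \<forall>s. act b s \<in> B) \<and> (\<forall>b\<in>B. act b 1 = b)
     \<and> (\<forall>b\<in>B. \<forall>s t. act b (s * t) = act (act b s) t)"

definition is_morph :: "'a set \<Rightarrow> ('a \<Rightarrow> 's::monoid_mult \<Rightarrow> 'a) \<Rightarrow> 'b set \<Rightarrow> ('b \<Rightarrow> 's \<Rightarrow> 'b)
    \<Rightarrow> ('a \<Rightarrow> 'b) \<Rightarrow> bool" where
  "is_morph A actA B actB f \<longleftrightarrow> (\<forall>a\<in>A. f a \<in> B) \<and> (\<forall>a\<in>A. \<forall>s. f (actA a s) = actB (f a) s)"

definition is_retract :: "'a set \<Rightarrow> ('a \<Rightarrow> 's::monoid_mult \<Rightarrow> 'a) \<Rightarrow> 'b set \<Rightarrow> ('b \<Rightarrow> 's \<Rightarrow> 'b)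
    \<Rightarrow> ('a \<Rightarrow> 'b) \<Rightarrow> bool" where
  "is_retract A actA B actB e \<longleftrightarrow> (\<exists>r. is_morph B actB A actA r \<and> (\<forall>a\<in>A. r (e a) = a))"

text \<open>EqVV x s y t is xs = yt (with x = y allowed, giving xs = xt); EqVC x s a is xs = a.\<close>
datatype ('v, 's, 'a) eqn = EqVV 'v 's 'v 's | EqVC 'v 's 'a

fun eqn_vars :: "('v, 's, 'a) eqn \<Rightarrow> 'v set" where
  "eqn_vars (EqVV x s y t) = {x, y}"
| "eqn_vars (EqVC x s a) = {x}"

definition vars :: "('v, 's, 'a) eqn set \<Rightarrow> 'v set" where
  "vars \<Sigma> = \<Union> (eqn_vars ` \<Sigma>)"

definition eqns_over :: "'a set \<Rightarrow> ('v, 's, 'a) eqn set \<Rightarrow> bool" where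
  "eqns_over A \<Sigma> \<longleftrightarrow> (\<forall>x s a. EqVC x s a \<in> \<Sigma> \<longrightarrow> a \<in> A)"

definition solves :: "('b \<Rightarrow> 's \<Rightarrow> 'b) \<Rightarrow> ('a \<Rightarrow> 'b) \<Rightarrow> ('v \<Rightarrow> 'b) \<Rightarrow> ('v, 's, 'a) eqn set \<Rightarrow> bool" where
  "solves actB e f \<Sigma> \<longleftrightarrow>
     (\<forall>x s y t. EqVV x s y t \<in> \<Sigma> \<longrightarrow> actB (f x) s = actB (f y) t)
   \<and> (\<forall>x s a. EqVC x s a \<in> \<Sigma> \<longrightarrow> actB (f x) s = e a)"

definition solution_in :: "'b set \<Rightarrow> ('b \<Rightarrow> 's \<Rightarrow> 'b) \<Rightarrow> ('a \<Rightarrow> 'b) \<Rightarrow> ('v \<Rightarrow> 'b)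
    \<Rightarrow> ('v, 's, 'a) eqn set \<Rightarrow> bool" where
  "solution_in B actB e f \<Sigma> \<longleftrightarrow> (\<forall>x\<in>vars \<Sigma>. f x \<in> B) \<and> solves actB e f \<Sigma>"

text \<open>The containing act is taken on the type 'a + 'v \<times> 's, which is large enough: the
  sub-act generated by A and the solution values always injects into it.\<close>
definition consistent :: "'a set \<Rightarrow> ('a \<Rightarrow> 's::monoid_mult \<Rightarrow> 'a) \<Rightarrow> ('v, 's, 'a) eqn set \<Rightarrow> bool" where
  "consistent A act \<Sigma> \<longleftrightarrow> eqns_over A \<Sigma> \<and>
     (\<exists>(B :: ('a + 'v \<times> 's) set) actB e f.
        is_act B actB \<and> is_morph A act B actB e \<and> inj_on e A \<and> solution_in B actB e f \<Sigma>)"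

text \<open>n-absolute purity (variables renamed into nat; finite systems lose nothing).\<close>
definition n_abs_pure :: "'a set \<Rightarrow> ('a \<Rightarrow> 's::monoid_mult \<Rightarrow> 'a) \<Rightarrow> nat \<Rightarrow> bool" where
  "n_abs_pure A act n \<longleftrightarrow> (\<forall>\<Sigma> :: (nat, 's, 'a) eqn set.
     finite \<Sigma> \<and> consistent A act \<Sigma> \<and> card (vars \<Sigma>) \<le> n \<longrightarrow> (\<exists>f. solution_in A act id f \<Sigma>))"

definition abs_pure :: "'a set \<Rightarrow> ('a \<Rightarrow> 's::monoid_mult \<Rightarrow> 'a) \<Rightarrow> bool" where
  "abs_pure A act \<longleftrightarrow> (\<forall>n. n_abs_pure A act n)"

type_synonym ('s, 'a) sys = "(nat, 's, 'a) eqn set"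
text \<open>A variable of the canonical construction is a pair (\<Sigma>, x): variable x tagged by its
  system, which makes variable sets of distinct systems disjoint.\<close>
type_synonym ('s, 'a) cvar = "('s, 'a) sys \<times> nat"
type_synonym ('s, 'a) celt = "'a + (('s, 'a) cvar \<times> 's)"

definition Theta :: "'a set \<Rightarrow> ('a \<Rightarrow> 's::monoid_mult \<Rightarrow> 'a) \<Rightarrow> nat \<Rightarrow> ('s, 'a) sys set" where
  "Theta A act m = {\<Sigma>. finite \<Sigma> \<and> consistent A act \<Sigma> \<and> card (vars \<Sigma>) = m}"

definition Omega :: "('s, 'a) sys set \<Rightarrow> ('s, 'a) cvar set" where
  "Omega Ss = {(\<Sigma>, x). \<Sigma> \<in> Ss \<and> x \<in> vars \<Sigma>}"

definition sysn :: "'a set \<Rightarrow> ('a \<Rightarrow> 's::monoid_mult \<Rightarrow> 'a) \<Rightarrow> nat \<Rightarrow> ('s, 'a) sys set" where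
  "sysn A act n = (\<Union>m\<in>{1..n}. Theta A act m)"

definition sysinf :: "'a set \<Rightarrow> ('a \<Rightarrow> 's::monoid_mult \<Rightarrow> 'a) \<Rightarrow> ('s, 'a) sys set" where
  "sysinf A act = (\<Union>m. Theta A act m)"

text \<open>Carrier and action of A \<squnion> F_S(\<Omega>); the free act F_S(\<Omega>) is \<Omega> \<times> S with (w,t)s = (w,ts).\<close>
definition ccar :: "'a set \<Rightarrow> ('s, 'a) cvar set \<Rightarrow> ('s::monoid_mult, 'a) celt set" where
  "ccar A \<Omega> = Inl ` A \<union> Inr ` (\<Omega> \<times> UNIV)"

definition cact :: "('a \<Rightarrow> 's::monoid_mult \<Rightarrow> 'a) \<Rightarrow> ('s, 'a) celt \<Rightarrow> 's \<Rightarrow> ('s, 'a) celt" where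
  "cact act z s = (case z of Inl a \<Rightarrow> Inl (act a s) | Inr (w, t) \<Rightarrow> Inr (w, t * s))"

definition gens :: "('s, 'a) sys set \<Rightarrow> (('s, 'a) celt \<times> ('s, 'a) celt) set" where
  "gens Ss = {(Inr ((\<Sigma>, x), u), Inr ((\<Sigma>, y), v)) | \<Sigma> x u y v. \<Sigma> \<in> Ss \<and> EqVV x u y v \<in> \<Sigma>}
           \<union> {(Inr ((\<Sigma>, x), s), Inl a) | \<Sigma> x s a. \<Sigma> \<in> Ss \<and> EqVC x s a \<in> \<Sigma>}"

inductive_set cong_gen :: "'x set \<Rightarrow> ('x \<Rightarrow> 's \<Rightarrow> 'x) \<Rightarrow> ('x \<times> 'x) set \<Rightarrow> ('x \<times> 'x) set"
  for X act R where
  base: "p \<in> R \<Longrightarrow> p \<in> cong_gen X act R"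
| refl: "x \<in> X \<Longrightarrow> (x, x) \<in> cong_gen X act R"
| sym: "(x, y) \<in> cong_gen X act R \<Longrightarrow> (y, x) \<in> cong_gen X act R"
| trans: "(x, y) \<in> cong_gen X act R \<Longrightarrow> (y, z) \<in> cong_gen X act R \<Longrightarrow> (x, z) \<in> cong_gen X act R"
| comp: "(x, y) \<in> cong_gen X act R \<Longrightarrow> (act x s, act y s) \<in> cong_gen X act R"

definition quot_act :: "('x \<times> 'x) set \<Rightarrow> ('x \<Rightarrow> 's \<Rightarrow> 'x) \<Rightarrow> 'x set \<Rightarrow> 's \<Rightarrow> 'x set" where
  "quot_act \<kappa> act c s = \<kappa> `` ((\<lambda>x. act x s) ` c)"

definition kappan where
  "kappan A act n = cong_gen (ccar A (Omega (sysn A act n))) (cact act) (gens (sysn A act n))"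
definition A1n_car where
  "A1n_car A act n = ccar A (Omega (sysn A act n)) // kappan A act n"
definition A1n_act where
  "A1n_act A act n = quot_act (kappan A act n) (cact act)"
definition embn where
  "embn A act n a = kappan A act n `` {Inl a}"

definition kappainf where
  "kappainf A act = cong_gen (ccar A (Omega (sysinf A act))) (cact act) (gens (sysinf A act))"
definition A1inf_car where
  "A1inf_car A act = ccar A (Omega (sysinf A act)) // kappainf A act"
definition A1inf_act where
  "A1inf_act A act = quot_act (kappainf A act) (cact act)"
definition embinf where
  "embinf A act a = kappainf A act `` {Inl a}"

definition iota where "iota A act j c = kappan A act j `` c"
definition iotainf where "iotainf A act c = kappainf A act `` c"

end

theory Submission
  imports Defs
begin

text \<open>A^n_1 is the quotient of A \<squnion> F_S(\<Omega>_n) by the congruence generated by the equations of all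
  consistent systems in at most n variables, so every such system is solved there by the classes of
  its own variables, and A is n-absolutely pure iff these canonical solutions can be pushed back
  into A, i.e. iff A is a retract of A^n_1. The substantial point is that adjoining further systems
  creates no new identifications between old elements: sending each additional system into a
  witness act of its own, glued along A to the smaller quotient, gives a map that is compatible with
  all generating pairs and separates the old classes. This makes a \<mapsto> [a] and the natural maps
  A^i_1 \<rightarrow> A^j_1 \<rightarrow> A^\<aleph>0_1 injective. Systems in arbitrary variables are first renamed into nat,
  which preserves consistency.\<close>

section \<open>Generated congruences and quotient acts\<close>

lemma cong_gen_subset:
  assumes "R \<subseteq> X \<times> X" and "\<And>x s. x \<in> X \<Longrightarrow> act x s \<in> X"
  shows "cong_gen X act R \<subseteq> X \<times> X"
proof
  fix p assume "p \<in> cong_gen X act R"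
  then show "p \<in> X \<times> X"
    by (induction rule: cong_gen.induct) (use assms in auto)
qed

lemma equiv_cong_gen:
  assumes "R \<subseteq> X \<times> X" and "\<And>x s. x \<in> X \<Longrightarrow> act x s \<in> X"
  shows "equiv X (cong_gen X act R)"
proof (rule equivI)
  show "cong_gen X act R \<subseteq> X \<times> X" using cong_gen_subset[OF assms] .
  show "refl_on X (cong_gen X act R)"
    using cong_gen_subset[OF assms] by (auto simp: refl_on_def intro: cong_gen.refl)
  show "sym (cong_gen X act R)" by (auto simp: sym_def intro: cong_gen.sym)
  show "trans (cong_gen X act R)" by (auto simp: trans_def intro: cong_gen.trans)
qed

lemma cong_gen_mono:
  assumes "X \<subseteq> X'" and "R \<subseteq> R'"
  shows "cong_gen X act R \<subseteq> cong_gen X' act R'"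
proof
  fix p assume "p \<in> cong_gen X act R"
  then show "p \<in> cong_gen X' act R'"
  proof (induction rule: cong_gen.induct)
    case (base p)
    then show ?case using assms(2) by (blast intro: cong_gen.base)
  next
    case (refl x)
    then show ?case using assms(1) by (blast intro: cong_gen.refl)
  qed (blast intro: cong_gen.intros)+
qed

lemma cong_gen_empty: "cong_gen X act {} \<subseteq> Id"
proof
  fix p assume "p \<in> cong_gen X act {}"
  then show "p \<in> Id" by (induction rule: cong_gen.induct) auto
qed

lemma cong_gen_eq_if_compatible:
  assumes "R \<subseteq> X \<times> X" and "\<And>x s. x \<in> X \<Longrightarrow> act x s \<in> X"
    and "\<And>p q. (p, q) \<in> R \<Longrightarrow> \<phi> p = \<phi> q"
    and "\<And>x s. x \<in> X \<Longrightarrow> \<phi> (act x s) = G (\<phi> x) s"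
    and "(x, y) \<in> cong_gen X act R"
  shows "\<phi> x = \<phi> y"
proof -
  have sub: "cong_gen X act R \<subseteq> X \<times> X" using cong_gen_subset[OF assms(1,2)] .
  have "\<phi> (fst p) = \<phi> (snd p)" if "p \<in> cong_gen X act R" for p
    using that
  proof (induction rule: cong_gen.induct)
    case (comp a b s)
    then have "a \<in> X" "b \<in> X" using sub by auto
    with comp show ?case using assms(4) by simp
  qed (use assms(3) in auto)
  from this[OF assms(5)] show ?thesis by simp
qed

lemma quot_act_class:
  assumes "equiv X K" and "x \<in> X" and "\<And>x y s. (x, y) \<in> K \<Longrightarrow> (act x s, act y s) \<in> K"
  shows "quot_act K act (K``{x}) s = K``{act x s}"
proof -
  have "K``{act y s} = K``{act x s}" if "(x, y) \<in> K" for y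
    using equiv_class_eq[OF assms(1) assms(3)[OF that]] by simp
  moreover have "(x, x) \<in> K" using assms(1,2) by (simp add: equiv_def refl_on_def)
  ultimately show ?thesis unfolding quot_act_def by blast
qed

lemma is_act_quotient:
  assumes "is_act X act" and "equiv X K" and "\<And>x y s. (x, y) \<in> K \<Longrightarrow> (act x s, act y s) \<in> K"
  shows "is_act (X // K) (quot_act K act)"
  unfolding is_act_def
proof (intro conjI ballI allI; elim quotientE; simp only:)
  fix x s t assume x: "x \<in> X"
  have xs: "act x s \<in> X" using assms(1) x by (simp add: is_act_def)
  have cls: "quot_act K act (K``{y}) u = K``{act y u}" if "y \<in> X" for y u
    using quot_act_class[where act = act, OF assms(2) that assms(3)] .
  show "quot_act K act (K``{x}) s \<in> X // K" using cls[OF x] xs by (simp add: quotientI)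
  show "quot_act K act (K``{x}) 1 = K``{x}" using cls[OF x] assms(1) x by (simp add: is_act_def)
  show "quot_act K act (K``{x}) (s * t) = quot_act K act (quot_act K act (K``{x}) s) t"
    using cls[OF x] cls[OF xs] assms(1) x by (simp add: is_act_def)
qed

lemma quotient_morph_exists:
  assumes "equiv X K" and "\<And>x y s. (x, y) \<in> K \<Longrightarrow> (act x s, act y s) \<in> K"
    and "\<And>x. x \<in> X \<Longrightarrow> \<phi> x \<in> C" and "\<And>x s. x \<in> X \<Longrightarrow> \<phi> (act x s) = actC (\<phi> x) s"
    and "\<And>x y. (x, y) \<in> K \<Longrightarrow> \<phi> x = \<phi> y"
  shows "\<exists>r. is_morph (X // K) (quot_act K act) C actC r \<and> (\<forall>x\<in>X. r (K``{x}) = \<phi> x)"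
proof (intro exI conjI)
  define r where "r c = \<phi> (SOME x. x \<in> c)" for c
  show cls: "\<forall>x\<in>X. r (K``{x}) = \<phi> x"
  proof
    fix x assume "x \<in> X"
    then have "x \<in> K``{x}" by (rule equiv_class_self[OF assms(1)])
    then have "(SOME y. y \<in> K``{x}) \<in> K``{x}" by (rule someI)
    then show "r (K``{x}) = \<phi> x" unfolding r_def using assms(5) by auto
  qed
  show "is_morph (X // K) (quot_act K act) C actC r"
    unfolding is_morph_def
  proof (intro conjI ballI allI; elim quotientE; simp only:)
    fix x s assume x: "x \<in> X"
    have "(act x s, act x s) \<in> K" using assms(1,2) x by (simp add: equiv_def refl_on_def)
    then have "act x s \<in> X" using assms(1) by (auto simp: equiv_def refl_on_def)
    then show "r (K``{x}) \<in> C" "r (quot_act K act (K``{x}) s) = actC (r (K``{x})) s"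
      using cls x assms(3,4) quot_act_class[where act = act, OF assms(1) x assms(2)] by simp_all
  qed
qed

section \<open>Systems of equations and their solutions\<close>

lemma EqVV_vars: "EqVV x s y t \<in> \<Sigma> \<Longrightarrow> x \<in> vars \<Sigma> \<and> y \<in> vars \<Sigma>"
  and EqVC_vars: "EqVC x s a \<in> \<Sigma> \<Longrightarrow> x \<in> vars \<Sigma>"
  unfolding vars_def by force+

lemma finite_vars:
  fixes \<Sigma> :: "('v, 's, 'a) eqn set"
  assumes "finite \<Sigma>"
  shows "finite (vars \<Sigma>)"
proof -
  have "finite (eqn_vars e)" for e :: "('v, 's, 'a) eqn" by (cases e) auto
  with assms show ?thesis unfolding vars_def by simp
qed

lemma vars_empty_iff:
  fixes \<Sigma> :: "('v, 's, 'a) eqn set"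
  shows "vars \<Sigma> = {} \<longleftrightarrow> \<Sigma> = {}"
proof -
  have "eqn_vars e \<noteq> {}" for e :: "('v, 's, 'a) eqn" by (cases e) auto
  then show ?thesis unfolding vars_def by auto
qed

lemma solution_in_empty: "solution_in B actB e f {}"
  by (simp add: solution_in_def solves_def vars_def)

lemma vars_rename:
  fixes \<Sigma> :: "('v, 's, 'a) eqn set"
  shows "vars (map_eqn \<rho> id id ` \<Sigma>) = \<rho> ` vars \<Sigma>"
proof -
  have "eqn_vars (map_eqn \<rho> id id e) = \<rho> ` eqn_vars e" for e :: "('v, 's, 'a) eqn" by (cases e) auto
  then show ?thesis unfolding vars_def by auto
qed

lemma EqVV_rename_iff:
  "EqVV x' s y' t \<in> map_eqn \<rho> id id ` \<Sigma> \<longleftrightarrow> (\<exists>x y. x' = \<rho> x \<and> y' = \<rho> y \<and> EqVV x s y t \<in> \<Sigma>)"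
proof
  assume "EqVV x' s y' t \<in> map_eqn \<rho> id id ` \<Sigma>"
  then obtain e where "e \<in> \<Sigma>" "EqVV x' s y' t = map_eqn \<rho> id id e" by blast
  then show "\<exists>x y. x' = \<rho> x \<and> y' = \<rho> y \<and> EqVV x s y t \<in> \<Sigma>" by (cases e) auto
qed force

lemma EqVC_rename_iff:
  "EqVC x' s a \<in> map_eqn \<rho> id id ` \<Sigma> \<longleftrightarrow> (\<exists>x. x' = \<rho> x \<and> EqVC x s a \<in> \<Sigma>)"
proof
  assume "EqVC x' s a \<in> map_eqn \<rho> id id ` \<Sigma>"
  then obtain e where "e \<in> \<Sigma>" "EqVC x' s a = map_eqn \<rho> id id e" by blast
  then show "\<exists>x. x' = \<rho> x \<and> EqVC x s a \<in> \<Sigma>" by (cases e) auto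
qed force

lemma eqns_over_rename: "eqns_over A (map_eqn \<rho> id id ` \<Sigma>) \<longleftrightarrow> eqns_over A \<Sigma>"
  by (auto simp: eqns_over_def EqVC_rename_iff)

lemma solution_in_rename:
  assumes "solution_in B actB e f \<Sigma>" and "\<And>x. x \<in> vars \<Sigma> \<Longrightarrow> g (\<rho> x) = f x"
  shows "solution_in B actB e g (map_eqn \<rho> id id ` \<Sigma>)"
  using assms EqVV_vars EqVC_vars
  unfolding solution_in_def solves_def vars_rename EqVV_rename_iff EqVC_rename_iff
  by (smt (verit) imageE)

lemma solution_in_unrename:
  assumes "solution_in B actB e g (map_eqn \<rho> id id ` \<Sigma>)"
  shows "solution_in B actB e (g \<circ> \<rho>) \<Sigma>"
  using assms unfolding solution_in_def solves_def vars_rename EqVV_rename_iff EqVC_rename_iff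
  by auto blast+

lemma is_morph_comp:
  "is_morph A actA B actB f \<Longrightarrow> is_morph B actB C actC g \<Longrightarrow> is_morph A actA C actC (g \<circ> f)"
  by (simp add: is_morph_def)

lemma solution_in_morph:
  assumes "solution_in B actB e f \<Sigma>" and "is_morph B actB C actC r"
    and "eqns_over A \<Sigma>" and "\<And>a. a \<in> A \<Longrightarrow> r (e a) = e' a"
  shows "solution_in C actC e' (r \<circ> f) \<Sigma>"
proof -
  have fB: "f x \<in> B" if "x \<in> vars \<Sigma>" for x using assms(1) that by (simp add: solution_in_def)
  show ?thesis
    using assms EqVV_vars EqVC_vars fB
    unfolding solution_in_def solves_def is_morph_def eqns_over_def
    by (smt (verit) comp_apply)
qed

lemma is_act_subact:
  assumes "is_act B actB" and "P \<subseteq> B" and "\<And>b s. b \<in> P \<Longrightarrow> actB b s \<in> P"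
  shows "is_act P actB"
  using assms unfolding is_act_def by blast

lemma is_act_transport:
  assumes "is_act P actP" and "inj_on R P"
  defines "actR \<equiv> \<lambda>z s. R (actP (inv_into P R z) s)"
  shows "is_act (R ` P) actR" and "is_morph P actP (R ` P) actR R"
proof -
  have inv: "inv_into P R (R b) = b" if "b \<in> P" for b using assms(2) that by simp
  show "is_morph P actP (R ` P) actR R"
    using assms(1) inv unfolding is_morph_def is_act_def actR_def by auto
  show "is_act (R ` P) actR"
    using assms(1) inv unfolding is_act_def actR_def by auto
qed

lemma generated_subact:
  fixes \<rho> :: "'v \<Rightarrow> 'w" and X :: "('a + 'w \<times> 's::monoid_mult) set"
  assumes act: "is_act A act" and B: "is_act B actB" and e: "is_morph A act B actB e"
    and sol: "solution_in B actB e f \<Sigma>" and inj: "inj_on \<rho> (vars \<Sigma>)"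
    and X_def: "X = Inl ` A \<union> Inr ` (\<rho> ` vars \<Sigma> \<times> UNIV)"
    and \<phi>_def: "\<phi> = (\<lambda>z. case z of Inl a \<Rightarrow> e a | Inr (w, t) \<Rightarrow> actB (f (inv_into (vars \<Sigma>) \<rho> w)) t)"
  shows "is_act (\<phi> ` X) actB" and "is_morph A act (\<phi> ` X) actB e"
    and "solution_in (\<phi> ` X) actB e f \<Sigma>"
proof -
  have \<phi>_Inr: "\<phi> (Inr (\<rho> x, t)) = actB (f x) t" if "x \<in> vars \<Sigma>" for x t
    using inj that by (simp add: \<phi>_def)
  have fB: "f x \<in> B" if "x \<in> vars \<Sigma>" for x using sol that by (simp add: solution_in_def)
  have eP: "e a \<in> \<phi> ` X" if "a \<in> A" for a
    using that by (force simp: X_def \<phi>_def)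
  have fP: "f x \<in> \<phi> ` X" if "x \<in> vars \<Sigma>" for x
  proof -
    have "f x = \<phi> (Inr (\<rho> x, 1))" using \<phi>_Inr[OF that] B fB[OF that] by (simp add: is_act_def)
    then show ?thesis using that by (simp add: X_def)
  qed
  have P_sub: "\<phi> ` X \<subseteq> B"
    using e B fB by (auto simp: X_def is_morph_def is_act_def \<phi>_Inr) (simp add: \<phi>_def)
  have P_closed: "actB b s \<in> \<phi> ` X" if "b \<in> \<phi> ` X" for b s
  proof -
    obtain z where z: "z \<in> X" "b = \<phi> z" using \<open>b \<in> \<phi> ` X\<close> by blast
    show ?thesis
    proof (cases z)
      case (Inl a)
      then have "a \<in> A" "actB b s = e (act a s)" using z e by (auto simp: X_def is_morph_def \<phi>_def)
      then show ?thesis using eP act by (simp add: is_act_def)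
    next
      case (Inr p)
      then obtain x t where "x \<in> vars \<Sigma>" "z = Inr (\<rho> x, t)" using z by (auto simp: X_def)
      then have "actB b s = \<phi> (Inr (\<rho> x, t * s))" using z B fB by (simp add: \<phi>_Inr is_act_def)
      then show ?thesis using \<open>x \<in> vars \<Sigma>\<close> by (simp add: X_def)
    qed
  qed
  show "is_act (\<phi> ` X) actB" using is_act_subact[OF B P_sub P_closed] .
  show "is_morph A act (\<phi> ` X) actB e" using e eP by (simp add: is_morph_def)
  show "solution_in (\<phi> ` X) actB e f \<Sigma>" using sol fP by (simp add: solution_in_def)
qed

text \<open>The renamed system is solved in the sub-act \<phi> ` X of the old witness generated by A and the
  old solution. As an image of X, this sub-act embeds into the carrier type that consistency
  prescribes for the new variables.\<close>
lemma consistent_rename: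
  fixes \<Sigma> :: "('v, 's::monoid_mult, 'a) eqn set" and \<rho> :: "'v \<Rightarrow> 'w"
  assumes act: "is_act A act" and cons: "consistent A act \<Sigma>" and inj: "inj_on \<rho> (vars \<Sigma>)"
  shows "consistent A act (map_eqn \<rho> id id ` \<Sigma>)"
proof -
  obtain B :: "('a + 'v \<times> 's) set" and actB e f where B: "is_act B actB"
    and e: "is_morph A act B actB e" "inj_on e A" and sol: "solution_in B actB e f \<Sigma>"
    and over: "eqns_over A \<Sigma>"
    using cons unfolding consistent_def by blast
  define X :: "('a + 'w \<times> 's) set" where "X = Inl ` A \<union> Inr ` (\<rho> ` vars \<Sigma> \<times> UNIV)"
  define \<phi> where "\<phi> = (\<lambda>z. case z of Inl a \<Rightarrow> e a | Inr (w, t) \<Rightarrow> actB (f (inv_into (vars \<Sigma>) \<rho> w)) t)"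
  note P = generated_subact[OF act B e(1) sol inj X_def \<phi>_def]
  define R where "R = inv_into X \<phi>"
  have R_inj: "inj_on R (\<phi> ` X)" by (simp add: R_def inj_on_inv_into)
  define actR where "actR = (\<lambda>z s. R (actB (inv_into (\<phi> ` X) R z) s))"
  note R_morph = is_act_transport[OF P(1) R_inj, folded actR_def]
  have "is_morph A act (R ` \<phi> ` X) actR (R \<circ> e)" using is_morph_comp[OF P(2) R_morph(2)] .
  moreover have "inj_on (R \<circ> e) A"
    using e(2) inj_on_subset[OF R_inj] P(2) by (simp add: comp_inj_on is_morph_def image_subset_iff)
  moreover have "solution_in (R ` \<phi> ` X) actR (R \<circ> e) (R \<circ> f) \<Sigma>"
    using solution_in_morph[OF P(3) R_morph(2) over] by simp
  then have "solution_in (R ` \<phi> ` X) actR (R \<circ> e) (R \<circ> f \<circ> inv_into (vars \<Sigma>) \<rho>)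
      (map_eqn \<rho> id id ` \<Sigma>)"
    by (rule solution_in_rename) (use inj in simp)
  ultimately show ?thesis
    using R_morph(1) over unfolding consistent_def eqns_over_rename by blast
qed

section \<open>The canonical act of a family of consistent systems\<close>

definition consistent_family :: "'a set \<Rightarrow> ('a \<Rightarrow> 's::monoid_mult \<Rightarrow> 'a) \<Rightarrow> ('s, 'a) sys set
    \<Rightarrow> bool" where
  "consistent_family A act Ss \<longleftrightarrow> (\<forall>\<Sigma>\<in>Ss. consistent A act \<Sigma>)"

definition canon_cong :: "'a set \<Rightarrow> ('a \<Rightarrow> 's::monoid_mult \<Rightarrow> 'a) \<Rightarrow> ('s, 'a) sys set
    \<Rightarrow> (('s, 'a) celt \<times> ('s, 'a) celt) set" where
  "canon_cong A act Ss = cong_gen (ccar A (Omega Ss)) (cact act) (gens Ss)"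

definition canon_car :: "'a set \<Rightarrow> ('a \<Rightarrow> 's::monoid_mult \<Rightarrow> 'a) \<Rightarrow> ('s, 'a) sys set
    \<Rightarrow> ('s, 'a) celt set set" where
  "canon_car A act Ss = ccar A (Omega Ss) // canon_cong A act Ss"

definition canon_act :: "'a set \<Rightarrow> ('a \<Rightarrow> 's::monoid_mult \<Rightarrow> 'a) \<Rightarrow> ('s, 'a) sys set
    \<Rightarrow> ('s, 'a) celt set \<Rightarrow> 's \<Rightarrow> ('s, 'a) celt set" where
  "canon_act A act Ss = quot_act (canon_cong A act Ss) (cact act)"

definition canon_emb :: "'a set \<Rightarrow> ('a \<Rightarrow> 's::monoid_mult \<Rightarrow> 'a) \<Rightarrow> ('s, 'a) sys set
    \<Rightarrow> 'a \<Rightarrow> ('s, 'a) celt set" where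
  "canon_emb A act Ss a = canon_cong A act Ss `` {Inl a}"

lemma consistent_family_mono:
  "consistent_family A act Ss \<Longrightarrow> Ss0 \<subseteq> Ss \<Longrightarrow> consistent_family A act Ss0"
  by (auto simp: consistent_family_def)

lemma ccar_Inl [simp]: "Inl a \<in> ccar A \<Omega> \<longleftrightarrow> a \<in> A"
  and ccar_Inr [simp]: "Inr ((\<Sigma>, x), t) \<in> ccar A (Omega Ss) \<longleftrightarrow> \<Sigma> \<in> Ss \<and> x \<in> vars \<Sigma>"
  by (auto simp: ccar_def Omega_def)

lemma cact_simps [simp]:
  "cact act (Inl a) s = Inl (act a s)" "cact act (Inr (w, t)) s = Inr (w, t * s)"
  by (simp_all add: cact_def)

lemma ccar_mono: "Ss0 \<subseteq> Ss \<Longrightarrow> ccar A (Omega Ss0) \<subseteq> ccar A (Omega Ss)"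
  by (auto simp: ccar_def Omega_def)

lemma gens_mono: "Ss0 \<subseteq> Ss \<Longrightarrow> gens Ss0 \<subseteq> gens Ss"
  unfolding gens_def by fast

lemma gens_EqVV: "\<Sigma> \<in> Ss \<Longrightarrow> EqVV x u y v \<in> \<Sigma> \<Longrightarrow> (Inr ((\<Sigma>, x), u), Inr ((\<Sigma>, y), v)) \<in> gens Ss"
  and gens_EqVC: "\<Sigma> \<in> Ss \<Longrightarrow> EqVC x s a \<in> \<Sigma> \<Longrightarrow> (Inr ((\<Sigma>, x), s), Inl a) \<in> gens Ss"
  unfolding gens_def by auto

lemma canon_cong_mono: "Ss0 \<subseteq> Ss \<Longrightarrow> canon_cong A act Ss0 \<subseteq> canon_cong A act Ss"
  unfolding canon_cong_def by (intro cong_gen_mono ccar_mono gens_mono)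

lemma canon_cong_compat:
  "(x, y) \<in> canon_cong A act Ss \<Longrightarrow> (cact act x s, cact act y s) \<in> canon_cong A act Ss"
  unfolding canon_cong_def by (rule cong_gen.comp)

context
  fixes A :: "'a set" and act :: "'a \<Rightarrow> 's::monoid_mult \<Rightarrow> 'a"
  assumes act: "is_act A act"
begin

lemma is_act_ccar: "is_act (ccar A \<Omega>) (cact act)"
  using act unfolding is_act_def ccar_def cact_def by (auto simp: mult.assoc)

lemma cact_closed: "z \<in> ccar A \<Omega> \<Longrightarrow> cact act z s \<in> ccar A \<Omega>"
  using is_act_ccar by (simp add: is_act_def)

lemma gens_subset:
  assumes "consistent_family A act Ss"
  shows "gens Ss \<subseteq> ccar A (Omega Ss) \<times> ccar A (Omega Ss)"
  using assms by (auto simp: gens_def consistent_family_def consistent_def eqns_over_def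
      dest: EqVV_vars EqVC_vars)

lemma equiv_canon_cong:
  "consistent_family A act Ss \<Longrightarrow> equiv (ccar A (Omega Ss)) (canon_cong A act Ss)"
  unfolding canon_cong_def by (rule equiv_cong_gen[OF gens_subset cact_closed])

lemma canon_act_class:
  "consistent_family A act Ss \<Longrightarrow> x \<in> ccar A (Omega Ss) \<Longrightarrow>
    canon_act A act Ss (canon_cong A act Ss `` {x}) s = canon_cong A act Ss `` {cact act x s}"
  unfolding canon_act_def
  by (rule quot_act_class[where act = "cact act", OF equiv_canon_cong _ canon_cong_compat])

lemma is_act_canon:
  "consistent_family A act Ss \<Longrightarrow> is_act (canon_car A act Ss) (canon_act A act Ss)"
  unfolding canon_car_def canon_act_def
  by (rule is_act_quotient[where act = "cact act",
        OF is_act_ccar equiv_canon_cong canon_cong_compat])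

lemma canon_emb_morph:
  "consistent_family A act Ss \<Longrightarrow>
    is_morph A act (canon_car A act Ss) (canon_act A act Ss) (canon_emb A act Ss)"
  by (simp add: is_morph_def canon_emb_def canon_car_def canon_act_class quotientI)

lemma canon_solution:
  assumes cf: "consistent_family A act Ss" and "\<Sigma> \<in> Ss"
  shows "solution_in (canon_car A act Ss) (canon_act A act Ss) (canon_emb A act Ss)
     (\<lambda>x. canon_cong A act Ss `` {Inr ((\<Sigma>, x), 1)}) \<Sigma>"
proof -
  let ?K = "canon_cong A act Ss"
  have act_var: "canon_act A act Ss (?K `` {Inr ((\<Sigma>, x), 1)}) s = ?K `` {Inr ((\<Sigma>, x), s)}"
    if "x \<in> vars \<Sigma>" for x s
    using canon_act_class[OF cf, of "Inr ((\<Sigma>, x), 1)" s] that \<open>\<Sigma> \<in> Ss\<close> by simp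
  have gen_class: "?K `` {p} = ?K `` {q}" if "(p, q) \<in> gens Ss" for p q
  proof -
    have "(p, q) \<in> ?K" using that unfolding canon_cong_def by (rule cong_gen.base)
    then show ?thesis by (rule equiv_class_eq[OF equiv_canon_cong[OF cf]])
  qed
  show ?thesis
    unfolding solution_in_def solves_def
  proof (intro conjI ballI allI impI)
    fix x assume "x \<in> vars \<Sigma>"
    then show "?K `` {Inr ((\<Sigma>, x), 1)} \<in> canon_car A act Ss"
      using \<open>\<Sigma> \<in> Ss\<close> by (simp add: canon_car_def quotientI)
  next
    fix x s y t assume e: "EqVV x s y t \<in> \<Sigma>"
    then show "canon_act A act Ss (?K `` {Inr ((\<Sigma>, x), 1)}) s
        = canon_act A act Ss (?K `` {Inr ((\<Sigma>, y), 1)}) t"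
      using act_var EqVV_vars[OF e] gen_class[OF gens_EqVV[OF \<open>\<Sigma> \<in> Ss\<close> e]] by simp
  next
    fix x s a assume e: "EqVC x s a \<in> \<Sigma>"
    then show "canon_act A act Ss (?K `` {Inr ((\<Sigma>, x), 1)}) s = canon_emb A act Ss a"
      using act_var EqVC_vars[OF e] gen_class[OF gens_EqVC[OF \<open>\<Sigma> \<in> Ss\<close> e]]
      by (simp add: canon_emb_def)
  qed
qed

lemma canon_retract_iff:
  assumes cf: "consistent_family A act Ss"
  shows "is_retract A act (canon_car A act Ss) (canon_act A act Ss) (canon_emb A act Ss)
     \<longleftrightarrow> (\<forall>\<Sigma>\<in>Ss. \<exists>g. solution_in A act id g \<Sigma>)"
proof
  assume "is_retract A act (canon_car A act Ss) (canon_act A act Ss) (canon_emb A act Ss)"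
  then obtain r where r: "is_morph (canon_car A act Ss) (canon_act A act Ss) A act r"
    and r_emb: "\<forall>a\<in>A. r (canon_emb A act Ss a) = a"
    unfolding is_retract_def by blast
  show "\<forall>\<Sigma>\<in>Ss. \<exists>g. solution_in A act id g \<Sigma>"
  proof
    fix \<Sigma> assume \<Sigma>: "\<Sigma> \<in> Ss"
    then have "eqns_over A \<Sigma>" using cf by (simp add: consistent_family_def consistent_def)
    have "solution_in A act id (r \<circ> (\<lambda>x. canon_cong A act Ss `` {Inr ((\<Sigma>, x), 1)})) \<Sigma>"
      by (rule solution_in_morph[OF canon_solution[OF cf \<Sigma>] r \<open>eqns_over A \<Sigma>\<close>]) (simp add: r_emb)
    then show "\<exists>g. solution_in A act id g \<Sigma>" by blast
  qed
next
  assume "\<forall>\<Sigma>\<in>Ss. \<exists>g. solution_in A act id g \<Sigma>"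
  then obtain g where g: "\<And>\<Sigma>. \<Sigma> \<in> Ss \<Longrightarrow> solution_in A act id (g \<Sigma>) \<Sigma>" by metis
  let ?X = "ccar A (Omega Ss)" and ?K = "canon_cong A act Ss"
  define \<phi> where "\<phi> z = (case z of Inl a \<Rightarrow> a | Inr ((\<Sigma>, x), t) \<Rightarrow> act (g \<Sigma> x) t)" for z
  have gA: "g \<Sigma> x \<in> A" if "\<Sigma> \<in> Ss" "x \<in> vars \<Sigma>" for \<Sigma> x
    using g[OF that(1)] that(2) by (simp add: solution_in_def)
  have \<phi>_A: "\<phi> z \<in> A" if "z \<in> ?X" for z
    using that act gA by (auto simp: \<phi>_def ccar_def Omega_def is_act_def)
  have \<phi>_hom: "\<phi> (cact act z s) = act (\<phi> z) s" if "z \<in> ?X" for z s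
    using that act gA by (auto simp: \<phi>_def ccar_def Omega_def is_act_def)
  have \<phi>_gens: "\<phi> p = \<phi> q" if "(p, q) \<in> gens Ss" for p q
    using that g by (auto simp: gens_def \<phi>_def solution_in_def solves_def)
  have \<phi>_cong: "\<phi> p = \<phi> q" if "(p, q) \<in> ?K" for p q
    using cong_gen_eq_if_compatible[where act = "cact act" and \<phi> = \<phi>,
        OF gens_subset[OF cf] cact_closed \<phi>_gens \<phi>_hom] that
    by (simp add: canon_cong_def)
  obtain r where "is_morph (?X // ?K) (quot_act ?K (cact act)) A act r" "\<forall>x\<in>?X. r (?K `` {x}) = \<phi> x"
    using quotient_morph_exists[where act = "cact act" and \<phi> = \<phi>,
        OF equiv_canon_cong[OF cf] canon_cong_compat \<phi>_A \<phi>_hom \<phi>_cong]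
    by blast
  then have "is_morph (canon_car A act Ss) (canon_act A act Ss) A act r"
    and "\<forall>a\<in>A. r (canon_emb A act Ss a) = a"
    by (simp_all add: canon_car_def canon_act_def canon_emb_def \<phi>_def)
  then show "is_retract A act (canon_car A act Ss) (canon_act A act Ss) (canon_emb A act Ss)"
    unfolding is_retract_def by blast
qed

end

text \<open>For the restriction property below, the classes of the canonical act of Ss0 are glued with a
  witness act for every remaining system \<Sigma> \<in> Ss, the copy of A in the witness being identified with
  the classes of A. The map into the glued set is compatible with the action and with all
  generating pairs of Ss, and it separates the classes of Ss0.\<close>
context
  fixes A :: "'a set" and act :: "'a \<Rightarrow> 's::monoid_mult \<Rightarrow> 'a" and Ss0 Ss :: "('s, 'a) sys set"
    and W :: "('s, 'a) sys \<Rightarrow> ('a + nat \<times> 's) set" and Wact Wemb Wsol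
  assumes act: "is_act A act" and sub: "Ss0 \<subseteq> Ss" and cf: "consistent_family A act Ss"
    and W: "\<And>\<Sigma>. \<Sigma> \<in> Ss \<Longrightarrow> is_act (W \<Sigma>) (Wact \<Sigma>) \<and> is_morph A act (W \<Sigma>) (Wact \<Sigma>) (Wemb \<Sigma>)
      \<and> inj_on (Wemb \<Sigma>) A \<and> solution_in (W \<Sigma>) (Wact \<Sigma>) (Wemb \<Sigma>) (Wsol \<Sigma>) \<Sigma>"
begin

private lemmas cf0 = consistent_family_mono[OF cf sub]

definition glue_val where
  "glue_val \<Sigma> b = (if b \<in> Wemb \<Sigma> ` A then Inl (canon_emb A act Ss0 (inv_into A (Wemb \<Sigma>) b))
     else Inr (\<Sigma>, b))"

definition glue where
  "glue z = (case z of Inl a \<Rightarrow> Inl (canon_emb A act Ss0 a)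
     | Inr ((\<Sigma>, x), t) \<Rightarrow> if \<Sigma> \<in> Ss0 then Inl (canon_cong A act Ss0 `` {z})
         else glue_val \<Sigma> (Wact \<Sigma> (Wsol \<Sigma> x) t))"

definition glue_act where
  "glue_act v s = (case v of Inl c \<Rightarrow> Inl (canon_act A act Ss0 c s)
     | Inr (\<Sigma>, b) \<Rightarrow> glue_val \<Sigma> (Wact \<Sigma> b s))"

lemma glue_ccar0: "z \<in> ccar A (Omega Ss0) \<Longrightarrow> glue z = Inl (canon_cong A act Ss0 `` {z})"
  by (auto simp: glue_def canon_emb_def ccar_def Omega_def)

lemma glue_val_emb: "\<Sigma> \<in> Ss \<Longrightarrow> a \<in> A \<Longrightarrow> glue_val \<Sigma> (Wemb \<Sigma> a) = Inl (canon_emb A act Ss0 a)"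
  using W by (simp add: glue_val_def)

lemma glue_act_glue_val: "\<Sigma> \<in> Ss \<Longrightarrow> glue_act (glue_val \<Sigma> b) s = glue_val \<Sigma> (Wact \<Sigma> b s)"
proof (cases "b \<in> Wemb \<Sigma> ` A")
  case True
  assume "\<Sigma> \<in> Ss"
  then obtain a where "a \<in> A" "b = Wemb \<Sigma> a" using True by blast
  moreover have "act a s \<in> A" using act \<open>a \<in> A\<close> by (simp add: is_act_def)
  moreover have "Wact \<Sigma> (Wemb \<Sigma> a) s = Wemb \<Sigma> (act a s)"
    using W[OF \<open>\<Sigma> \<in> Ss\<close>] \<open>a \<in> A\<close> by (simp add: is_morph_def)
  ultimately show ?thesis
    using canon_emb_morph[OF act cf0] glue_val_emb[OF \<open>\<Sigma> \<in> Ss\<close>]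
    by (simp add: glue_act_def is_morph_def)
qed (simp add: glue_val_def glue_act_def)

lemma glue_cact:
  assumes "z \<in> ccar A (Omega Ss)"
  shows "glue (cact act z s) = glue_act (glue z) s"
proof (cases "z \<in> ccar A (Omega Ss0)")
  case True
  then show ?thesis
    using glue_ccar0 cact_closed[OF act] canon_act_class[OF act cf0] by (simp add: glue_act_def)
next
  case False
  with assms obtain \<Sigma> x t where z: "z = Inr ((\<Sigma>, x), t)"
    by (auto simp: ccar_def)
  with assms False have "\<Sigma> \<in> Ss" "\<Sigma> \<notin> Ss0" "x \<in> vars \<Sigma>" by auto
  then have "Wsol \<Sigma> x \<in> W \<Sigma>" using W by (simp add: solution_in_def)
  then have "Wact \<Sigma> (Wsol \<Sigma> x) (t * s) = Wact \<Sigma> (Wact \<Sigma> (Wsol \<Sigma> x) t) s"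
    using W[OF \<open>\<Sigma> \<in> Ss\<close>] by (simp add: is_act_def)
  then show ?thesis
    using z \<open>\<Sigma> \<notin> Ss0\<close> glue_act_glue_val[OF \<open>\<Sigma> \<in> Ss\<close>] by (simp add: glue_def)
qed

lemma glue_gens:
  assumes "(p, q) \<in> gens Ss"
  shows "glue p = glue q"
proof -
  have class_eq: "canon_cong A act Ss0 `` {p} = canon_cong A act Ss0 `` {q}" if "(p, q) \<in> gens Ss0"
  proof -
    have "(p, q) \<in> canon_cong A act Ss0" using that unfolding canon_cong_def by (rule cong_gen.base)
    then show ?thesis by (rule equiv_class_eq[OF equiv_canon_cong[OF act cf0]])
  qed
  show ?thesis
    using assms unfolding gens_def
  proof (elim UnE CollectE exE conjE)
    fix \<Sigma> x u y v assume pq: "(p, q) = (Inr ((\<Sigma>, x), u), Inr ((\<Sigma>, y), v))"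
      and "\<Sigma> \<in> Ss" "EqVV x u y v \<in> \<Sigma>"
    show ?thesis
    proof (cases "\<Sigma> \<in> Ss0")
      case True
      then show ?thesis
        using pq class_eq gens_EqVV[OF True \<open>EqVV x u y v \<in> \<Sigma>\<close>] by (simp add: glue_def)
    next
      case False
      then show ?thesis using pq W[OF \<open>\<Sigma> \<in> Ss\<close>] \<open>EqVV x u y v \<in> \<Sigma>\<close>
        by (simp add: glue_def solution_in_def solves_def)
    qed
  next
    fix \<Sigma> x s a assume pq: "(p, q) = (Inr ((\<Sigma>, x), s), Inl a)" and "\<Sigma> \<in> Ss" "EqVC x s a \<in> \<Sigma>"
    then have "a \<in> A" using cf by (auto simp: consistent_family_def consistent_def eqns_over_def)
    show ?thesis
    proof (cases "\<Sigma> \<in> Ss0")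
      case True
      then show ?thesis
        using pq class_eq gens_EqVC[OF True \<open>EqVC x s a \<in> \<Sigma>\<close>] by (simp add: glue_def canon_emb_def)
    next
      case False
      then show ?thesis using pq W[OF \<open>\<Sigma> \<in> Ss\<close>] \<open>EqVC x s a \<in> \<Sigma>\<close> glue_val_emb[OF \<open>\<Sigma> \<in> Ss\<close> \<open>a \<in> A\<close>]
        by (simp add: glue_def solution_in_def solves_def)
    qed
  qed
qed

lemma canon_cong_restrict_witnessed:
  "canon_cong A act Ss \<inter> ccar A (Omega Ss0) \<times> ccar A (Omega Ss0) \<subseteq> canon_cong A act Ss0"
proof clarify
  fix z w assume zw: "(z, w) \<in> canon_cong A act Ss"
    and "z \<in> ccar A (Omega Ss0)" "w \<in> ccar A (Omega Ss0)"
  have "glue z = glue w"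
    using cong_gen_eq_if_compatible[where act = "cact act" and \<phi> = glue,
        OF gens_subset[OF act cf] cact_closed[OF act] glue_gens glue_cact] zw
    by (simp add: canon_cong_def)
  then have "canon_cong A act Ss0 `` {z} = canon_cong A act Ss0 `` {w}"
    using glue_ccar0 \<open>z \<in> _\<close> \<open>w \<in> _\<close> by simp
  then show "(z, w) \<in> canon_cong A act Ss0"
    using eq_equiv_class_iff[OF equiv_canon_cong[OF act cf0]] \<open>z \<in> _\<close> \<open>w \<in> _\<close> by blast
qed

end

lemma canon_cong_restrict:
  fixes A :: "'a set" and act :: "'a \<Rightarrow> 's::monoid_mult \<Rightarrow> 'a"
  assumes act: "is_act A act" and sub: "Ss0 \<subseteq> Ss" and cf: "consistent_family A act Ss"
  shows "canon_cong A act Ss \<inter> ccar A (Omega Ss0) \<times> ccar A (Omega Ss0) \<subseteq> canon_cong A act Ss0"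
proof -
  define witness where "witness \<Sigma> B actB e f \<longleftrightarrow> is_act B actB \<and> is_morph A act B actB e
    \<and> inj_on e A \<and> solution_in B actB e f \<Sigma>" for \<Sigma> :: "('s, 'a) sys" and B :: "('a + nat \<times> 's) set"
    and actB e f
  have "\<forall>\<Sigma>\<in>Ss. \<exists>B actB e f. witness \<Sigma> B actB e f"
    using cf unfolding consistent_family_def consistent_def witness_def by blast
  then obtain W Wact Wemb Wsol where "\<And>\<Sigma>. \<Sigma> \<in> Ss \<Longrightarrow> witness \<Sigma> (W \<Sigma>) (Wact \<Sigma>) (Wemb \<Sigma>) (Wsol \<Sigma>)"
    by metis
  from canon_cong_restrict_witnessed[OF act sub cf this[unfolded witness_def]] show ?thesis .
qed

context
  fixes A :: "'a set" and act :: "'a \<Rightarrow> 's::monoid_mult \<Rightarrow> 'a"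
  assumes act: "is_act A act"
begin

lemma inj_on_canon_emb:
  assumes cf: "consistent_family A act Ss"
  shows "inj_on (canon_emb A act Ss) A"
proof (rule inj_onI)
  fix a b assume "a \<in> A" "b \<in> A" "canon_emb A act Ss a = canon_emb A act Ss b"
  then have "(Inl a, Inl b) \<in> canon_cong A act Ss"
    using eq_equiv_class_iff[OF equiv_canon_cong[OF act cf]] by (simp add: canon_emb_def)
  then have "(Inl a, Inl b) \<in> canon_cong A act {}"
    using canon_cong_restrict[OF act empty_subsetI cf] \<open>a \<in> A\<close> \<open>b \<in> A\<close> by auto
  then show "a = b" using cong_gen_empty by (auto simp: canon_cong_def gens_def)
qed

lemma canon_incl_class:
  assumes cf: "consistent_family A act Ss" and sub: "Ss0 \<subseteq> Ss" and x: "x \<in> ccar A (Omega Ss0)"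
  shows "canon_cong A act Ss `` (canon_cong A act Ss0 `` {x}) = canon_cong A act Ss `` {x}"
proof -
  have same_class: "canon_cong A act Ss `` {y} = canon_cong A act Ss `` {x}"
    if "y \<in> canon_cong A act Ss0 `` {x}" for y
  proof -
    have "(x, y) \<in> canon_cong A act Ss0" using that by simp
    then have "(x, y) \<in> canon_cong A act Ss" by (rule subsetD[OF canon_cong_mono[OF sub]])
    then show ?thesis by (rule equiv_class_eq[OF equiv_canon_cong[OF act cf], symmetric])
  qed
  have "x \<in> canon_cong A act Ss0 `` {x}"
    using equiv_class_self[OF equiv_canon_cong[OF act consistent_family_mono[OF cf sub]] x] .
  then show ?thesis
    by (subst Image_eq_UN, intro SUP_eq_const) (use same_class in blast)+
qed

lemma canon_incl_morph:
  assumes cf: "consistent_family A act Ss" and sub: "Ss0 \<subseteq> Ss"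
  shows "is_morph (canon_car A act Ss0) (canon_act A act Ss0)
    (canon_car A act Ss) (canon_act A act Ss) ((``) (canon_cong A act Ss))"
  unfolding is_morph_def canon_car_def
proof (intro conjI ballI allI; elim quotientE; simp only:)
  fix x s assume x: "x \<in> ccar A (Omega Ss0)"
  have cf0: "consistent_family A act Ss0" using consistent_family_mono[OF cf sub] .
  have "x \<in> ccar A (Omega Ss)" "cact act x s \<in> ccar A (Omega Ss0)"
    using ccar_mono[OF sub] x cact_closed[OF act x] by auto
  then show "canon_cong A act Ss `` (canon_cong A act Ss0 `` {x})
      \<in> ccar A (Omega Ss) // canon_cong A act Ss"
    and "canon_cong A act Ss `` canon_act A act Ss0 (canon_cong A act Ss0 `` {x}) s =
      canon_act A act Ss (canon_cong A act Ss `` (canon_cong A act Ss0 `` {x})) s"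
    using canon_incl_class[OF cf sub] canon_act_class[OF act cf] canon_act_class[OF act cf0] x
    by (simp_all add: quotientI)
qed

lemma inj_on_canon_incl:
  assumes cf: "consistent_family A act Ss" and sub: "Ss0 \<subseteq> Ss"
  shows "inj_on ((``) (canon_cong A act Ss)) (canon_car A act Ss0)"
proof (rule inj_onI)
  fix c d assume "c \<in> canon_car A act Ss0" "d \<in> canon_car A act Ss0"
    and eq: "canon_cong A act Ss `` c = canon_cong A act Ss `` d"
  then obtain x y where x: "x \<in> ccar A (Omega Ss0)" "c = canon_cong A act Ss0 `` {x}"
    and y: "y \<in> ccar A (Omega Ss0)" "d = canon_cong A act Ss0 `` {y}"
    by (auto simp: canon_car_def elim!: quotientE)
  have "canon_cong A act Ss `` {x} = canon_cong A act Ss `` {y}"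
    using eq x y canon_incl_class[OF cf sub] by simp
  then have "(x, y) \<in> canon_cong A act Ss"
    using eq_equiv_class_iff[OF equiv_canon_cong[OF act cf]] x y ccar_mono[OF sub] by blast
  then have "(x, y) \<in> canon_cong A act Ss0"
    using canon_cong_restrict[OF act sub cf] x y by blast
  then show "c = d"
    using x y equiv_class_eq[OF equiv_canon_cong[OF act consistent_family_mono[OF cf sub]]] by simp
qed

lemma canon_incl_emb:
  "consistent_family A act Ss \<Longrightarrow> Ss0 \<subseteq> Ss \<Longrightarrow> a \<in> A \<Longrightarrow>
    canon_cong A act Ss `` canon_emb A act Ss0 a = canon_emb A act Ss a"
  unfolding canon_emb_def by (rule canon_incl_class) simp_all

lemma canon_incl_trans:
  assumes cf: "consistent_family A act Ss" and "Ss0 \<subseteq> Ss1" "Ss1 \<subseteq> Ss"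
    and "c \<in> canon_car A act Ss0"
  shows "canon_cong A act Ss `` (canon_cong A act Ss1 `` c) = canon_cong A act Ss `` c"
proof -
  obtain x where x: "x \<in> ccar A (Omega Ss0)" "c = canon_cong A act Ss0 `` {x}"
    using \<open>c \<in> canon_car A act Ss0\<close> by (auto simp: canon_car_def elim: quotientE)
  have cf1: "consistent_family A act Ss1" using consistent_family_mono[OF cf \<open>Ss1 \<subseteq> Ss\<close>] .
  have "canon_cong A act Ss1 `` c = canon_cong A act Ss1 `` {x}"
    using canon_incl_class[OF cf1 \<open>Ss0 \<subseteq> Ss1\<close> x(1)] x(2) by simp
  moreover have "x \<in> ccar A (Omega Ss1)" using x(1) ccar_mono[OF \<open>Ss0 \<subseteq> Ss1\<close>] by blast
  ultimately show ?thesis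
    using canon_incl_class[OF cf \<open>Ss1 \<subseteq> Ss\<close>]
      canon_incl_class[OF cf order_trans[OF assms(2,3)] x(1)] x(2)
    by simp
qed

lemma canon_car_UN:
  assumes cf: "consistent_family A act Ss" and sub: "\<And>i. F i \<subseteq> Ss"
    and cover: "\<And>x. x \<in> ccar A (Omega Ss) \<Longrightarrow> \<exists>i. x \<in> ccar A (Omega (F i))"
  shows "canon_car A act Ss = (\<Union>i. (``) (canon_cong A act Ss) ` canon_car A act (F i))"
proof
  show "(\<Union>i. (``) (canon_cong A act Ss) ` canon_car A act (F i)) \<subseteq> canon_car A act Ss"
    using canon_incl_morph[OF cf sub] by (auto simp: is_morph_def)
next
  show "canon_car A act Ss \<subseteq> (\<Union>i. (``) (canon_cong A act Ss) ` canon_car A act (F i))"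
  proof
    fix c assume "c \<in> canon_car A act Ss"
    then obtain x where x: "x \<in> ccar A (Omega Ss)" "c = canon_cong A act Ss `` {x}"
      by (auto simp: canon_car_def elim: quotientE)
    obtain i where "x \<in> ccar A (Omega (F i))" using cover[OF x(1)] by blast
    then have "c = canon_cong A act Ss `` (canon_cong A act (F i) `` {x})"
      and "canon_cong A act (F i) `` {x} \<in> canon_car A act (F i)"
      using canon_incl_class[OF cf sub] x by (simp_all add: canon_car_def quotientI)
    then show "c \<in> (\<Union>i. (``) (canon_cong A act Ss) ` canon_car A act (F i))" by blast
  qed
qed

lemma canon_solution_renamed:
  fixes \<Sigma> :: "('v, 's, 'a) eqn set"
  assumes cf: "consistent_family A act Ss" and "finite \<Sigma>" and cons: "consistent A act \<Sigma>"
    and renamed_mem: "\<And>\<Sigma>' :: ('s, 'a) sys. finite \<Sigma>' \<Longrightarrow> consistent A act \<Sigma>' \<Longrightarrow> \<Sigma>' \<noteq> {} \<Longrightarrow>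
      card (vars \<Sigma>') = card (vars \<Sigma>) \<Longrightarrow> \<Sigma>' \<in> Ss"
  shows "\<exists>f. solution_in (canon_car A act Ss) (canon_act A act Ss) (canon_emb A act Ss) f \<Sigma>"
proof (cases "\<Sigma> = {}")
  case True
  then show ?thesis using solution_in_empty by blast
next
  case False
  obtain \<rho> :: "'v \<Rightarrow> nat" where \<rho>: "inj_on \<rho> (vars \<Sigma>)"
    using finite_imp_inj_to_nat_seg[OF finite_vars[OF \<open>finite \<Sigma>\<close>]] by blast
  let ?\<Sigma>' = "map_eqn \<rho> id id ` \<Sigma>"
  have "?\<Sigma>' \<in> Ss"
    using renamed_mem \<open>finite \<Sigma>\<close> False consistent_rename[OF act cons \<rho>] card_image[OF \<rho>]
    by (simp add: vars_rename)
  from solution_in_unrename[OF canon_solution[OF act cf this]] show ?thesis by blast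
qed

end

section \<open>The acts A^n_1 and A^\<aleph>0_1\<close>

lemma mem_sysinf_iff: "\<Sigma> \<in> sysinf A act \<longleftrightarrow> finite \<Sigma> \<and> consistent A act \<Sigma>"
  by (simp add: sysinf_def Theta_def)

lemma mem_sysn_iff:
  "\<Sigma> \<in> sysn A act n \<longleftrightarrow> finite \<Sigma> \<and> consistent A act \<Sigma> \<and> \<Sigma> \<noteq> {} \<and> card (vars \<Sigma>) \<le> n"
proof -
  have "\<Sigma> \<noteq> {} \<longleftrightarrow> 1 \<le> card (vars \<Sigma>)" if "finite \<Sigma>"
    using finite_vars[OF that] vars_empty_iff[of \<Sigma>] by (simp add: Suc_le_eq card_gt_0_iff)
  then show ?thesis by (auto simp: sysn_def Theta_def)
qed

lemma sysn_mono: "i \<le> j \<Longrightarrow> sysn A act i \<subseteq> sysn A act j"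
  by (auto simp: mem_sysn_iff)

lemma sysn_subset_sysinf: "sysn A act n \<subseteq> sysinf A act"
  by (auto simp: mem_sysn_iff mem_sysinf_iff)

lemma consistent_family_sysinf: "consistent_family A act (sysinf A act)"
  by (simp add: consistent_family_def mem_sysinf_iff)

lemma consistent_family_sysn: "consistent_family A act (sysn A act n)"
  using consistent_family_mono[OF consistent_family_sysinf sysn_subset_sysinf] .

lemma ccar_sysinf_cover:
  assumes "x \<in> ccar A (Omega (sysinf A act))"
  shows "\<exists>n. x \<in> ccar A (Omega (sysn A act n))"
proof (cases x)
  case (Inr p)
  then obtain \<Sigma> y t where x: "x = Inr ((\<Sigma>, y), t)" by (metis prod.collapse)
  with assms have "\<Sigma> \<in> sysn A act (card (vars \<Sigma>))"
    by (auto simp: mem_sysn_iff mem_sysinf_iff vars_def)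
  with assms x show ?thesis by auto
qed (use assms in auto)

lemma n_abs_pure_iff:
  fixes A :: "'a set" and act :: "'a \<Rightarrow> 's::monoid_mult \<Rightarrow> 'a"
  shows "n_abs_pure A act n \<longleftrightarrow> (\<forall>\<Sigma>\<in>sysn A act n. \<exists>g. solution_in A act id g \<Sigma>)"
proof
  assume "n_abs_pure A act n"
  then show "\<forall>\<Sigma>\<in>sysn A act n. \<exists>g. solution_in A act id g \<Sigma>"
    by (simp add: n_abs_pure_def mem_sysn_iff)
next
  assume solvable: "\<forall>\<Sigma>\<in>sysn A act n. \<exists>g. solution_in A act id g \<Sigma>"
  show "n_abs_pure A act n"
    unfolding n_abs_pure_def
  proof (intro allI impI)
    fix \<Sigma> :: "('s, 'a) sys" assume "finite \<Sigma> \<and> consistent A act \<Sigma> \<and> card (vars \<Sigma>) \<le> n"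
    then show "\<exists>f. solution_in A act id f \<Sigma>"
      using solvable by (cases "\<Sigma> = {}") (auto simp: mem_sysn_iff intro: solution_in_empty)
  qed
qed

lemma abs_pure_iff:
  fixes A :: "'a set" and act :: "'a \<Rightarrow> 's::monoid_mult \<Rightarrow> 'a"
  shows "abs_pure A act \<longleftrightarrow> (\<forall>\<Sigma>\<in>sysinf A act. \<exists>g. solution_in A act id g \<Sigma>)"
proof
  assume pure: "abs_pure A act"
  show "\<forall>\<Sigma>\<in>sysinf A act. \<exists>g. solution_in A act id g \<Sigma>"
  proof
    fix \<Sigma> assume "\<Sigma> \<in> sysinf A act"
    then have "finite \<Sigma> \<and> consistent A act \<Sigma> \<and> card (vars \<Sigma>) \<le> card (vars \<Sigma>)"
      by (simp add: mem_sysinf_iff)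
    moreover have "n_abs_pure A act (card (vars \<Sigma>))" using pure by (simp add: abs_pure_def)
    ultimately show "\<exists>g. solution_in A act id g \<Sigma>" unfolding n_abs_pure_def by blast
  qed
qed (auto simp: abs_pure_def n_abs_pure_def mem_sysinf_iff)

lemma A1n_canon:
  "A1n_car A act n = canon_car A act (sysn A act n)"
  "A1n_act A act n = canon_act A act (sysn A act n)"
  "embn A act n = canon_emb A act (sysn A act n)"
  "iota A act n = (``) (canon_cong A act (sysn A act n))"
  by (simp_all add: A1n_car_def A1n_act_def embn_def iota_def kappan_def canon_car_def canon_act_def
      canon_emb_def canon_cong_def fun_eq_iff)

lemma A1inf_canon:
  "A1inf_car A act = canon_car A act (sysinf A act)"
  "A1inf_act A act = canon_act A act (sysinf A act)"
  "embinf A act = canon_emb A act (sysinf A act)"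
  "iotainf A act = (``) (canon_cong A act (sysinf A act))"
  by (simp_all add: A1inf_car_def A1inf_act_def embinf_def iotainf_def kappainf_def canon_car_def
      canon_act_def canon_emb_def canon_cong_def fun_eq_iff)

lemma canon_solution_sysn:
  fixes A :: "'a set" and act :: "'a \<Rightarrow> 's::monoid_mult \<Rightarrow> 'a" and \<Sigma> :: "('v, 's, 'a) eqn set"
  assumes "is_act A act" and "finite \<Sigma>" and "consistent A act \<Sigma>" and "card (vars \<Sigma>) \<le> n"
  shows "\<exists>f. solution_in (canon_car A act (sysn A act n)) (canon_act A act (sysn A act n))
    (canon_emb A act (sysn A act n)) f \<Sigma>"
  by (rule canon_solution_renamed[OF assms(1) consistent_family_sysn assms(2,3)])
    (use assms(4) in \<open>simp add: mem_sysn_iff\<close>)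

lemma canon_solution_sysinf:
  fixes A :: "'a set" and act :: "'a \<Rightarrow> 's::monoid_mult \<Rightarrow> 'a" and \<Sigma> :: "('v, 's, 'a) eqn set"
  assumes "is_act A act" and "finite \<Sigma>" and "consistent A act \<Sigma>"
  shows "\<exists>f. solution_in (canon_car A act (sysinf A act)) (canon_act A act (sysinf A act))
    (canon_emb A act (sysinf A act)) f \<Sigma>"
  by (rule canon_solution_renamed[OF assms(1) consistent_family_sysinf assms(2,3)])
    (simp add: mem_sysinf_iff)

theorem mainTheorem15:
  fixes A :: "'a set" and act :: "'a \<Rightarrow> 's::monoid_mult \<Rightarrow> 'a"
  assumes "is_act A act"
  shows
    \<comment> \<open>(a) embeddings and natural identifications\<close>
    "((\<forall>n. is_act (A1n_car A act n) (A1n_act A act n)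
           \<and> is_morph A act (A1n_car A act n) (A1n_act A act n) (embn A act n)
           \<and> inj_on (embn A act n) A)
      \<and> is_act (A1inf_car A act) (A1inf_act A act)
      \<and> is_morph A act (A1inf_car A act) (A1inf_act A act) (embinf A act)
      \<and> inj_on (embinf A act) A
      \<and> (\<forall>i j. i \<le> j \<longrightarrow>
           is_morph (A1n_car A act i) (A1n_act A act i) (A1n_car A act j) (A1n_act A act j) (iota A act j)
         \<and> inj_on (iota A act j) (A1n_car A act i)
         \<and> (\<forall>a\<in>A. iota A act j (embn A act i a) = embn A act j a))
      \<and> (\<forall>i j k. i \<le> j \<and> j \<le> k \<longrightarrow>
           (\<forall>c\<in>A1n_car A act i. iota A act k (iota A act j c) = iota A act k c))
      \<and> (\<forall>n. is_morph (A1n_car A act n) (A1n_act A act n) (A1inf_car A act) (A1inf_act A act) (iotainf A act)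
         \<and> inj_on (iotainf A act) (A1n_car A act n)
         \<and> (\<forall>a\<in>A. iotainf A act (embn A act n a) = embinf A act a))
      \<and> (\<forall>i j. i \<le> j \<longrightarrow>
           (\<forall>c\<in>A1n_car A act i. iotainf A act (iota A act j c) = iotainf A act c))
      \<and> A1inf_car A act = (\<Union>n. iotainf A act ` A1n_car A act n))
   \<comment> \<open>(b) solutions in A^m_1, A^n_1 (n \<ge> m), A^{\<aleph>0}_1\<close>
   \<and> (\<forall>(\<Sigma> :: ('v, 's, 'a) eqn set) m. finite \<Sigma> \<and> consistent A act \<Sigma> \<and> card (vars \<Sigma>) = m \<longrightarrow>
        (\<forall>n\<ge>m. \<exists>f. solution_in (A1n_car A act n) (A1n_act A act n) (embn A act n) f \<Sigma>)
      \<and> (\<exists>f. solution_in (A1inf_car A act) (A1inf_act A act) (embinf A act) f \<Sigma>))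
   \<comment> \<open>(c) characterisation of (n-)absolute purity\<close>
   \<and> (\<forall>n. n_abs_pure A act n \<longleftrightarrow> is_retract A act (A1n_car A act n) (A1n_act A act n) (embn A act n))
   \<and> (abs_pure A act \<longleftrightarrow> is_retract A act (A1inf_car A act) (A1inf_act A act) (embinf A act))"
proof -
  note cf = consistent_family_sysn consistent_family_sysinf
  have cover: "canon_car A act (sysinf A act)
      = (\<Union>n. (``) (canon_cong A act (sysinf A act)) ` canon_car A act (sysn A act n))"
    by (rule canon_car_UN[OF assms cf(2) sysn_subset_sysinf ccar_sysinf_cover])
  show ?thesis
    unfolding A1n_canon A1inf_canon n_abs_pure_iff abs_pure_iff
    using is_act_canon[OF assms cf(1)] canon_emb_morph[OF assms cf(1)]
      inj_on_canon_emb[OF assms cf(1)] is_act_canon[OF assms cf(2)]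
      canon_emb_morph[OF assms cf(2)] inj_on_canon_emb[OF assms cf(2)]
      canon_incl_morph[OF assms cf(1) sysn_mono] inj_on_canon_incl[OF assms cf(1) sysn_mono]
      canon_incl_emb[OF assms cf(1) sysn_mono] canon_incl_trans[OF assms cf(1) sysn_mono sysn_mono]
      canon_incl_morph[OF assms cf(2) sysn_subset_sysinf]
      inj_on_canon_incl[OF assms cf(2) sysn_subset_sysinf]
      canon_incl_emb[OF assms cf(2) sysn_subset_sysinf]
      canon_incl_trans[OF assms cf(2) sysn_mono sysn_subset_sysinf]
      canon_solution_sysn[where 'v = 'v, OF assms] canon_solution_sysinf[where 'v = 'v, OF assms]
      canon_retract_iff[OF assms cf(1)] canon_retract_iff[OF assms cf(2)] cover
    by (intro conjI allI impI ballI; (elim conjE)?; simp)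
qed

end
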